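(* Let $X$ be a non-compact locally compact Hausdorff space. Then the set $\mathrm{AppInv}(C_0(X))$ of approximately invertible elements of $C_0(X)$ has empty interior in $C_0(X)$ (with respect to the sup norm).
   Context: $C_0(X)$ is the algebra of continuous complex functions on $X$ vanishing at infinity, with pointwise operations and the sup norm. An approximate identity in $C_0(X)$ is a net $(e_j)$ with $\|e_jh-h\|_\infty\to 0$ for every $h\in C_0(X)$. An element $f\in C_0(X)$ is approximately invertible if there is a net $(g_j)$ in $C_0(X)$ such that $(fg_j)$ is an approximate identity in $C_0(X)$. *)

theory Defs
  imports "HOL-Analysis.Analysis"
begin

text \<open>C_0(X): continuous complex functions on the space X vanishing at infinity.
  Functions are taken to be 0 outside the carrier (extensional convention).\<close>
definition C0 :: "'a topology \<Rightarrow> ('a \<Rightarrow> complex) set" where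
  "C0 X = {f. continuous_map X euclidean f
            \<and> (\<forall>e>0. compactin X {x \<in> topspace X. e \<le> cmod (f x)})
            \<and> (\<forall>x. x \<notin> topspace X \<longrightarrow> f x = 0)}"

definition supnorm :: "'a topology \<Rightarrow> ('a \<Rightarrow> complex) \<Rightarrow> real" where
  "supnorm X f = (SUP x\<in>topspace X. cmod (f x))"

text \<open>Nets are represented by proper filters F on an index type together with a map e.\<close>
definition approx_identity :: "'a topology \<Rightarrow> 'i filter \<Rightarrow> ('i \<Rightarrow> 'a \<Rightarrow> complex) \<Rightarrow> bool" where
  "approx_identity X F e \<longleftrightarrow> F \<noteq> bot \<and> (\<forall>j. e j \<in> C0 X)
     \<and> (\<forall>h\<in>C0 X. ((\<lambda>j. supnorm X (\<lambda>x. e j x * h x - h x)) \<longlongrightarrow> 0) F)"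

text \<open>Index type ('a => complex) suffices: any net in C0(X) can be pushed forward to a
  proper filter on C0(X) itself.\<close>
definition approx_invertible :: "'a topology \<Rightarrow> ('a \<Rightarrow> complex) \<Rightarrow> bool" where
  "approx_invertible X f \<longleftrightarrow> f \<in> C0 X \<and>
     (\<exists>(F :: ('a \<Rightarrow> complex) filter) (g :: ('a \<Rightarrow> complex) \<Rightarrow> 'a \<Rightarrow> complex).
        (\<forall>j. g j \<in> C0 X) \<and> approx_identity X F (\<lambda>j x. f x * g j x))"

definition AppInv :: "'a topology \<Rightarrow> ('a \<Rightarrow> complex) set" where
  "AppInv X = {f. approx_invertible X f}"

definition C0_interior :: "'a topology \<Rightarrow> ('a \<Rightarrow> complex) set \<Rightarrow> ('a \<Rightarrow> complex) set" where
  "C0_interior X S = {f \<in> S. \<exists>e>0. \<forall>g\<in>C0 X. supnorm X (\<lambda>x. g x - f x) < e \<longrightarrow> g \<in> S}"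

end

theory Submission
  imports Defs
begin

(* An approximately invertible f has no zero: at a zero x0, a bump h \<in> C0(X) with h x0 = 1
  keeps f g h - h at sup-distance at least 1 from 0, whatever g is. Yet every f \<in> C0(X) gets arbitrarily
  small somewhere when X is not compact, so soft-thresholding f at level d produces a function
  d-close to f with a zero. *)

lemma closedin_norm_ge:
  assumes "continuous_map X euclidean k"
  shows "closedin X {x \<in> topspace X. a \<le> cmod (k x)}"
proof -
  have "closedin X {x \<in> topspace X. k x \<in> {z. a \<le> cmod z}}"
    by (rule closedin_continuous_map_preimage[OF assms])
       (simp add: closed_Collect_le continuous_on_norm continuous_on_const continuous_on_id)
  then show ?thesis by simp
qed

lemma C0_norm_bounded:
  assumes "f \<in> C0 X"
  obtains B where "\<And>x. cmod (f x) \<le> B"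
proof -
  let ?S = "{x \<in> topspace X. 1 \<le> cmod (f x)}"
  have S: "compactin X ?S" and cf: "continuous_map X euclidean f"
    using assms unfolding C0_def by auto
  have "continuous_map X euclideanreal (\<lambda>x. cmod (f x))"
    using continuous_map_compose[OF cf, of euclideanreal cmod]
    by (simp add: o_def continuous_map_iff_continuous2 continuous_on_norm continuous_on_id)
  then have "compactin euclideanreal ((\<lambda>x. cmod (f x)) ` ?S)"
    using image_compactin[OF S] by blast
  then have "bounded ((\<lambda>x. cmod (f x)) ` ?S)" by (simp add: compact_imp_bounded)
  then obtain B where B: "\<forall>y\<in>(\<lambda>x. cmod (f x)) ` ?S. norm y \<le> B"
    by (auto simp: bounded_iff)
  have "cmod (f x) \<le> max 1 B" for x
  proof (cases "x \<in> topspace X")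
    case True
    then show ?thesis using B by (cases "1 \<le> cmod (f x)") force+
  next
    case False
    then show ?thesis using assms unfolding C0_def by auto
  qed
  then show ?thesis by (rule that)
qed

lemma C0_of_compact_support:
  assumes "continuous_map X euclidean h" "compactin X K"
    and "\<And>x. x \<in> topspace X - K \<Longrightarrow> h x = 0" "\<And>x. x \<notin> topspace X \<Longrightarrow> h x = 0"
  shows "h \<in> C0 X"
  unfolding C0_def
proof (intro CollectI conjI allI impI)
  fix e :: real assume "e > 0"
  then have "{x \<in> topspace X. e \<le> cmod (h x)} \<subseteq> K" using assms(3) by force
  then show "compactin X {x \<in> topspace X. e \<le> cmod (h x)}"
    using closed_compactin[OF assms(2)] closedin_norm_ge[OF assms(1)] by blast
qed (use assms in auto)

lemma C0_comp_norm_le: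
  assumes "f \<in> C0 X" "continuous_on UNIV \<phi>" "\<And>z. cmod (\<phi> z) \<le> cmod z"
  shows "(\<lambda>x. \<phi> (f x)) \<in> C0 X"
  unfolding C0_def
proof (intro CollectI conjI allI impI)
  have cf: "continuous_map X euclidean f" using assms(1) unfolding C0_def by auto
  then show cg: "continuous_map X euclidean (\<lambda>x. \<phi> (f x))"
    using continuous_map_compose[OF cf, of euclidean \<phi>] assms(2)
    by (simp add: o_def continuous_map_iff_continuous2)
  fix e :: real assume "e > 0"
  then have "compactin X {x \<in> topspace X. e \<le> cmod (f x)}"
    using assms(1) unfolding C0_def by auto
  moreover have "{x \<in> topspace X. e \<le> cmod (\<phi> (f x))} \<subseteq> {x \<in> topspace X. e \<le> cmod (f x)}"
    using assms(3) by (auto intro: order_trans)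
  ultimately show "compactin X {x \<in> topspace X. e \<le> cmod (\<phi> (f x))}"
    using closed_compactin closedin_norm_ge[OF cg] by blast
next
  fix x assume "x \<notin> topspace X"
  then have "f x = 0" using assms(1) unfolding C0_def by auto
  then show "\<phi> (f x) = 0" using assms(3)[of 0] by simp
qed

lemma C0_bump:
  assumes "Hausdorff_space X" "locally_compact_space X" "x0 \<in> topspace X"
  obtains h where "h \<in> C0 X" "h x0 = 1"
proof -
  obtain U K where UK: "openin X U" "compactin X K" "x0 \<in> U" "U \<subseteq> K"
    using assms unfolding locally_compact_space_def by blast
  have "completely_regular_space X"
    using assms locally_compact_regular_imp_completely_regular_space by blast
  then obtain \<phi> where \<phi>: "continuous_map X (subtopology euclidean {0..1::real}) \<phi>"
      "\<phi> ` (topspace X - U) \<subseteq> {0}" "\<phi> ` {x0} \<subseteq> {1}"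
    using Urysohn_completely_regular_compact_closed[of 0 1 X "{x0}" "topspace X - U"] UK assms(3)
    by (auto simp: disjnt_def)
  define h where "h x = (if x \<in> topspace X then complex_of_real (\<phi> x) else 0)" for x
  have "continuous_map X euclideanreal \<phi>"
    using \<phi>(1) continuous_map_into_fulltopology by blast
  then have "continuous_map X euclidean (\<lambda>x. complex_of_real (\<phi> x))"
    using continuous_map_compose[of X euclideanreal \<phi> euclidean complex_of_real]
    by (simp add: o_def continuous_map_iff_continuous2 continuous_on_of_real continuous_on_id)
  then have "continuous_map X euclidean h"
    by (rule continuous_map_eq) (simp add: h_def)
  then have "h \<in> C0 X"
    by (rule C0_of_compact_support[OF _ UK(2)]) (use \<phi>(2) UK(4) in \<open>auto simp: h_def\<close>)
  moreover have "h x0 = 1" using \<phi>(3) assms(3) by (simp add: h_def)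
  ultimately show ?thesis by (rule that)
qed

lemma norm_le_supnorm:
  assumes "\<And>x. cmod (k x) \<le> B" "x \<in> topspace X"
  shows "cmod (k x) \<le> supnorm X k"
  unfolding supnorm_def
  by (rule cSUP_upper[OF assms(2)]) (use assms(1) in \<open>auto intro: bdd_aboveI2[where M = B]\<close>)

lemma supnorm_le:
  assumes "topspace X \<noteq> {}" "\<And>x. x \<in> topspace X \<Longrightarrow> cmod (k x) \<le> B"
  shows "supnorm X k \<le> B"
  unfolding supnorm_def using assms by (rule cSUP_least)

lemma approx_identity_nonzero:
  assumes "Hausdorff_space X" "locally_compact_space X" "x0 \<in> topspace X"
    and "approx_identity X F e"
  obtains j where "e j x0 \<noteq> 0"
proof -
  obtain h where h: "h \<in> C0 X" "h x0 = 1" using C0_bump[OF assms(1-3)] .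
  have lim: "((\<lambda>j. supnorm X (\<lambda>x. e j x * h x - h x)) \<longlongrightarrow> 0) F" and "F \<noteq> bot"
    using assms(4) h(1) unfolding approx_identity_def by auto
  have "\<forall>\<^sub>F j in F. supnorm X (\<lambda>x. e j x * h x - h x) < 1"
    using order_tendstoD(2)[OF lim] by simp
  then obtain j where j: "supnorm X (\<lambda>x. e j x * h x - h x) < 1"
    using eventually_happens'[OF \<open>F \<noteq> bot\<close>] by blast
  obtain B1 where B1: "\<And>x. cmod (e j x) \<le> B1"
    using C0_norm_bounded assms(4) unfolding approx_identity_def by metis
  obtain B2 where B2: "\<And>x. cmod (h x) \<le> B2" using C0_norm_bounded h(1) by metis
  have "cmod (e j x * h x - h x) \<le> B1 * B2 + B2" for x
  proof -
    have "cmod (e j x * h x - h x) \<le> cmod (e j x) * cmod (h x) + cmod (h x)"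
      using norm_triangle_ineq4[of "e j x * h x" "h x"] by (simp add: norm_mult)
    also have "\<dots> \<le> B1 * B2 + B2"
      using B1[of x] B2[of x] order_trans[OF norm_ge_zero B1[of x]] by (intro add_mono mult_mono) auto
    finally show ?thesis .
  qed
  from norm_le_supnorm[where k = "\<lambda>x. e j x * h x - h x", OF this assms(3)] j
  have "e j x0 * h x0 - h x0 \<noteq> -1" by auto
  with h(2) have "e j x0 \<noteq> 0" by auto
  then show ?thesis by (rule that)
qed

lemma approx_invertible_nonzero:
  assumes "Hausdorff_space X" "locally_compact_space X" "x0 \<in> topspace X"
    and "approx_invertible X f"
  shows "f x0 \<noteq> 0"
proof -
  obtain F :: "('a \<Rightarrow> complex) filter" and g
    where "approx_identity X F (\<lambda>j x. f x * g j x)"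
    using assms(4) unfolding approx_invertible_def by blast
  from approx_identity_nonzero[OF assms(1-3) this] show ?thesis by auto
qed

lemma C0_exists_small_value:
  assumes "f \<in> C0 X" "\<not> compact_space X" "d > 0"
  obtains x where "x \<in> topspace X" "cmod (f x) < d"
proof -
  have "compactin X {x \<in> topspace X. d \<le> cmod (f x)}"
    using assms(1,3) unfolding C0_def by auto
  with assms(2) have "{x \<in> topspace X. d \<le> cmod (f x)} \<noteq> topspace X"
    unfolding compact_space_def by auto
  then show ?thesis using that by force
qed

definition soft_threshold :: "real \<Rightarrow> complex \<Rightarrow> complex" where
  "soft_threshold d z = (if cmod z \<le> d then 0 else complex_of_real (1 - d / cmod z) * z)"

lemma norm_soft_threshold_le:
  assumes "d \<ge> 0"
  shows "cmod (soft_threshold d z) \<le> cmod z"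
proof (cases "cmod z \<le> d")
  case False
  then have "0 < cmod z" using assms by linarith
  then have "d / cmod z \<le> 1" and "0 \<le> d / cmod z" using False assms by auto
  have "soft_threshold d z = complex_of_real (1 - d / cmod z) * z"
    using False by (simp add: soft_threshold_def)
  then have "cmod (soft_threshold d z) = \<bar>1 - d / cmod z\<bar> * cmod z"
    by (simp only: norm_mult norm_of_real)
  also have "\<dots> \<le> cmod z"
    using \<open>d / cmod z \<le> 1\<close> \<open>0 \<le> d / cmod z\<close> by (simp add: mult_left_le_one_le)
  finally show ?thesis .
qed (simp add: soft_threshold_def)

lemma norm_soft_threshold_diff_le:
  assumes "d \<ge> 0"
  shows "cmod (soft_threshold d z - z) \<le> d"
proof (cases "cmod z \<le> d")
  case False
  then have "0 < cmod z" using assms by linarith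
  have "soft_threshold d z - z = - complex_of_real (d / cmod z) * z"
    using False by (simp add: soft_threshold_def algebra_simps)
  then have "cmod (soft_threshold d z - z) = \<bar>d / cmod z\<bar> * cmod z"
    by (simp only: norm_minus_cancel norm_mult norm_of_real)
  also have "\<dots> = d" using \<open>0 < cmod z\<close> assms by simp
  finally show ?thesis by simp
qed (simp add: soft_threshold_def)

lemma continuous_on_soft_threshold:
  assumes "d > 0"
  shows "continuous_on UNIV (soft_threshold d)"
proof -
  have "continuous_on ({z. cmod z \<le> d} \<union> {z. d \<le> cmod z}) (soft_threshold d)"
    unfolding soft_threshold_def
    using assms
    by (intro continuous_on_cases continuous_intros)
       (auto simp: closed_Collect_le continuous_on_norm continuous_on_id continuous_on_const)
  moreover have "{z. cmod z \<le> d} \<union> {z. d \<le> cmod z} = UNIV" by auto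
  ultimately show ?thesis by simp
qed

theorem proposition3p10:
  fixes X :: "'a topology"
  assumes "Hausdorff_space X" and "locally_compact_space X" and "\<not> compact_space X"
  shows "C0_interior X (AppInv X) = {}"
proof (rule ccontr)
  assume "C0_interior X (AppInv X) \<noteq> {}"
  then obtain f e where "f \<in> AppInv X" "e > 0"
    and ball: "\<And>g. g \<in> C0 X \<Longrightarrow> supnorm X (\<lambda>x. g x - f x) < e \<Longrightarrow> g \<in> AppInv X"
    unfolding C0_interior_def by blast
  then have f: "f \<in> C0 X" unfolding AppInv_def approx_invertible_def by auto
  define d where "d = e / 2"
  have d: "0 < d" "d < e" using \<open>e > 0\<close> by (auto simp: d_def)
  define g where "g x = soft_threshold d (f x)" for x
  have "g \<in> C0 X" unfolding g_def
    using d(1) by (intro C0_comp_norm_le[OF f continuous_on_soft_threshold] norm_soft_threshold_le) auto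
  moreover have "supnorm X (\<lambda>x. g x - f x) \<le> d"
    using assms(3) d(1) unfolding compact_space_def
    by (intro supnorm_le) (auto simp: g_def norm_soft_threshold_diff_le)
  ultimately have g: "approx_invertible X g" using ball d unfolding AppInv_def by force
  obtain x0 where x0: "x0 \<in> topspace X" "cmod (f x0) < d"
    using C0_exists_small_value[OF f assms(3) d(1)] .
  then have "g x0 = 0" by (simp add: g_def soft_threshold_def)
  with approx_invertible_nonzero[OF assms(1,2) x0(1) g] show False by simp
qed

end
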